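(* Let $X$ and $Y$ be nonempty compact metric spaces. Then $d^{us}_{GH}(X,Y)=d_{GH}(X,Y)$.
   Context: For a metric space, $|xy|$ denotes distance. A set-valued map $f:X\rightrightarrows Y$ assigns to each $x\in X$ a nonempty $f(x)\subseteq Y$ and is identified with its graph. A correspondence between $X$ and $Y$ is a subset $R\subseteq X\times Y$ whose projections to $X$ and to $Y$ are both surjective, regarded as the set-valued map $x\mapsto R(x)=\{y:(x,y)\in R\}$; $R^{-1}=\{(y,x):(x,y)\in R\}$; $\mathcal R(X,Y)$ is the set of all correspondences. The distortion of a nonempty $\sigma\subseteq X\times Y$ is $\operatorname{dis}\sigma=\sup\{||xx'|-|yy'||:(x,y),(x',y')\in\sigma\}\in[0,\infty]$, and $d_{GH}(X,Y)=\frac12\inf\{\operatorname{dis}R:R\in\mathcal R(X,Y)\}$. A set-valued map $f$ is upper semicontinuous if for every $x$ and every open $U\supseteq f(x)$ there is a neighborhood $V$ of $x$ with $f(x')\subseteq U$ for all $x'\in V$. $\mathcal R_{us}(X,Y)$ is the set of $R\in\mathcal R(X,Y)$ with both $R$ and $R^{-1}$ upper semicontinuous, and $d^{us}_{GH}(X,Y)=\frac12\inf\{\operatorname{dis}R:R\in\mathcal R_{us}(X,Y)\}$. *)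

theory Defs
  imports "HOL-Analysis.Analysis" "HOL-Library.Extended_Real"
begin

text \<open>Metric spaces are modelled as subsets X of a type of class metric_space,
 with the induced metric and subspace topology.\<close>

definition correspondence :: "'a set \<Rightarrow> 'b set \<Rightarrow> ('a \<times> 'b) set \<Rightarrow> bool" where
  "correspondence X Y R \<longleftrightarrow> R \<subseteq> X \<times> Y \<and> fst ` R = X \<and> snd ` R = Y"

definition distortion :: "('a::metric_space \<times> 'b::metric_space) set \<Rightarrow> ereal" where
  "distortion \<sigma> = (SUP p\<in>\<sigma> \<times> \<sigma>.
      ereal \<bar>dist (fst (fst p)) (fst (snd p)) - dist (snd (fst p)) (snd (snd p))\<bar>)"

definition usc_map :: "'a::metric_space set \<Rightarrow> 'b::metric_space set \<Rightarrow> ('a \<times> 'b) set \<Rightarrow> bool" where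
  "usc_map X Y R \<longleftrightarrow> (\<forall>x\<in>X. \<forall>U. openin (top_of_set Y) U \<and> R `` {x} \<subseteq> U \<longrightarrow>
      (\<exists>V. openin (top_of_set X) V \<and> x \<in> V \<and> (\<forall>x'\<in>V. R `` {x'} \<subseteq> U)))"

definition GH_dist :: "'a::metric_space set \<Rightarrow> 'b::metric_space set \<Rightarrow> ereal" where
  "GH_dist X Y = (INF R\<in>{R. correspondence X Y R}. distortion R) / 2"

definition GH_dist_us :: "'a::metric_space set \<Rightarrow> 'b::metric_space set \<Rightarrow> ereal" where
  "GH_dist_us X Y = (INF R\<in>{R. correspondence X Y R \<and> usc_map X Y R \<and> usc_map Y X (converse R)}.
      distortion R) / 2"

end

theory Submission
  imports Defs
begin

text \<open>Replace a correspondence \<open>R\<close> by its closure. Between compact spaces this is still a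
  correspondence, and its distortion is unchanged because the distortion is the supremum of a
  continuous function over \<open>R \<times> R\<close>. A set-valued map whose graph is closed in \<open>X \<times> Y\<close> with
  \<open>Y\<close> compact is upper semicontinuous, since projecting along a compact factor is a closed
  map; so the closure and its converse are both upper semicontinuous, and the infimum over
  \<open>\<R>\<^sub>u\<^sub>s(X,Y)\<close> is no larger than the one over \<open>\<R>(X,Y)\<close>.\<close>

lemma usc_map_if_closedin_graph:
  assumes "compact Y" and "closedin (top_of_set (X \<times> Y)) R"
  shows "usc_map X Y R"
  unfolding usc_map_def
proof (intro ballI allI impI)
  fix x U
  assume "x \<in> X" and U: "openin (top_of_set Y) U \<and> R `` {x} \<subseteq> U"
  define C where "C = R \<inter> (X \<times> (Y - U))"
  have "closedin (top_of_set (X \<times> Y)) C"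
    unfolding C_def using assms(2) U by (intro closedin_Int closedin_Times) auto
  moreover have "closed_map (top_of_set (X \<times> Y)) (top_of_set X) fst"
    using Abstract_Topological_Spaces.closed_map_fst[of "top_of_set Y" "top_of_set X"] \<open>compact Y\<close>
    by (simp add: compact_space_subtopology subtopology_Times euclidean_product_topology)
  ultimately have "closedin (top_of_set X) (fst ` C)"
    by (simp add: closed_map_def)
  then have "openin (top_of_set X) (X - fst ` C)"
    by (simp add: openin_diff)
  moreover have "x \<in> X - fst ` C"
    using \<open>x \<in> X\<close> U unfolding C_def by auto
  moreover have "R `` {x'} \<subseteq> U" if "x' \<in> X - fst ` C" for x'
    using that closedin_subset[OF assms(2)] unfolding C_def by force
  ultimately show "\<exists>V. openin (top_of_set X) V \<and> x \<in> V \<and> (\<forall>x'\<in>V. R `` {x'} \<subseteq> U)"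
    by blast
qed

lemma closed_converse:
  assumes "closed R"
  shows "closed (converse R)"
proof -
  have "converse R = prod.swap -` R" by auto
  then show ?thesis using assms by (simp add: closed_vimage continuous_on_swap)
qed

lemma usc_maps_if_closed:
  assumes "compact X" "compact Y" "closed R" "R \<subseteq> X \<times> Y"
  shows "usc_map X Y R" and "usc_map Y X (converse R)"
proof -
  show "usc_map X Y R"
    using assms by (intro usc_map_if_closedin_graph closed_subset)
  have "converse R \<subseteq> Y \<times> X"
    using assms(4) by auto
  then show "usc_map Y X (converse R)"
    using assms by (intro usc_map_if_closedin_graph closed_subset closed_converse)
qed

lemma correspondence_closure:
  assumes "closed X" "closed Y" "correspondence X Y R"
  shows "correspondence X Y (closure R)"
proof -
  have sub: "closure R \<subseteq> X \<times> Y"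
    using assms by (intro closure_minimal closed_Times) (auto simp: correspondence_def)
  then have "fst ` closure R \<subseteq> X" "snd ` closure R \<subseteq> Y"
    by auto
  moreover have "X \<subseteq> fst ` closure R" "Y \<subseteq> snd ` closure R"
    using assms(3) unfolding correspondence_def by (metis image_mono closure_subset)+
  ultimately show ?thesis
    using sub by (simp add: correspondence_def subset_antisym)
qed

lemma distortion_mono: "R \<subseteq> S \<Longrightarrow> distortion R \<le> distortion S"
  unfolding distortion_def by (intro SUP_subset_mono) auto

lemma distortion_closure:
  fixes R :: "('a::metric_space \<times> 'b::metric_space) set"
  shows "distortion (closure R) = distortion R"
proof (rule antisym)
  define g where "g p = ereal \<bar>dist (fst (fst p)) (fst (snd p)) - dist (snd (fst p)) (snd (snd p))\<bar>"
    for p :: "('a \<times> 'b) \<times> ('a \<times> 'b)"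
  have "continuous_on (closure (R \<times> R)) g"
    unfolding g_def by (intro continuous_intros)
  moreover have "g ` (R \<times> R) \<subseteq> {..distortion R}"
    unfolding distortion_def g_def by (auto intro: SUP_upper)
  ultimately have "g ` closure (R \<times> R) \<subseteq> {..distortion R}"
    by (rule image_closure_subset[OF _ closed_atMost])
  then show "distortion (closure R) \<le> distortion R"
    unfolding distortion_def g_def closure_Times by (auto intro: SUP_least)
  show "distortion R \<le> distortion (closure R)"
    by (intro distortion_mono closure_subset)
qed

theorem mainTheorem5:
  fixes X :: "'a::metric_space set" and Y :: "'b::metric_space set"
  assumes "compact X" "X \<noteq> {}" "compact Y" "Y \<noteq> {}"
  shows "GH_dist_us X Y = GH_dist X Y"
proof -
  let ?\<R> = "{R. correspondence X Y R}"
  let ?\<R>\<^sub>u\<^sub>s = "{R. correspondence X Y R \<and> usc_map X Y R \<and> usc_map Y X (converse R)}"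
  have "(INF R\<in>?\<R>\<^sub>u\<^sub>s. distortion R) \<le> (INF R\<in>?\<R>. distortion R)"
  proof (rule INF_mono)
    fix R assume "R \<in> ?\<R>"
    then have corr: "correspondence X Y (closure R)"
      using assms by (simp add: correspondence_closure compact_imp_closed)
    then have "closure R \<subseteq> X \<times> Y"
      by (simp add: correspondence_def)
    with corr have "closure R \<in> ?\<R>\<^sub>u\<^sub>s"
      using assms by (simp add: usc_maps_if_closed)
    then show "\<exists>S\<in>?\<R>\<^sub>u\<^sub>s. distortion S \<le> distortion R"
      using distortion_closure[of R] by (metis order_refl)
  qed
  moreover have "(INF R\<in>?\<R>. distortion R) \<le> (INF R\<in>?\<R>\<^sub>u\<^sub>s. distortion R)"
    by (rule INF_superset_mono) auto
  ultimately have "(INF R\<in>?\<R>\<^sub>u\<^sub>s. distortion R) = (INF R\<in>?\<R>. distortion R)"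
    by (rule antisym)
  then show ?thesis
    unfolding GH_dist_us_def GH_dist_def by simp
qed

end
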